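(* Let $C=(1,c_2,c_3,c_4,c_5,c_6)=(1,c_2,2c_2-1,c_4,c_2+c_4-1,2c_4-1)$ be a system with $c_4\ge 3c_2-1$, and let $\ell=\lceil c_5/c_3\rceil$. Suppose $\mathrm{grd}_C(\ell c_3)=\ell c_3-c_5+1-\lfloor(\ell c_3-c_5)/c_2\rfloor(c_2-1)$ and $\mathrm{grd}_C(\ell c_3)\le\ell$. Then $C$ is canonical and the subsystem $(1,c_2,2c_2-1,c_4,c_2+c_4-1)$ is noncanonical.
   Context: A system is a tuple $C=(c_1,\dots,c_n)$ of integers with $1=c_1<c_2<\dots<c_n$; for $k\le n$, $(c_1,\dots,c_k)$ is a subsystem. For a positive integer $v$, $\mathrm{opt}_C(v)$ is the minimum of $\sum_i x_i$ over $x\in\mathbb{Z}_{\ge0}^n$ with $\sum_i c_ix_i=v$. The greedy representation of $v$ is produced by: for $i=n$ down to $1$, while $c_i\le$ remaining value, take a coin $c_i$. $\mathrm{grd}_C(v)$ is its number of coins. A positive integer $w$ is a counterexample if $\mathrm{opt}_C(w)<\mathrm{grd}_C(w)$; $C$ is canonical if it has none, noncanonical otherwise. *)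

theory Defs
  imports Complex_Main
begin

text \<open>A coin system is a list C = [c_1,...,c_n] with 1 = c_1 < c_2 < ... < c_n.
  Coin c_{i+1} of the paper is C ! i.\<close>

definition is_system :: "nat list \<Rightarrow> bool" where
  "is_system C \<longleftrightarrow> C \<noteq> [] \<and> C ! 0 = 1 \<and> sorted_wrt (<) C"

definition reps :: "nat list \<Rightarrow> nat \<Rightarrow> nat list set" where
  "reps C v = {x. length x = length C \<and> (\<Sum>i<length C. C ! i * x ! i) = v}"

definition opt :: "nat list \<Rightarrow> nat \<Rightarrow> nat" where
  "opt C v = Min (sum_list ` reps C v)"

fun grd_desc :: "nat list \<Rightarrow> nat \<Rightarrow> nat" where
  "grd_desc [] v = 0"
| "grd_desc (c # cs) v = v div c + grd_desc cs (v mod c)"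

definition grd :: "nat list \<Rightarrow> nat \<Rightarrow> nat" where
  "grd C v = grd_desc (rev C) v"

definition counterexample :: "nat list \<Rightarrow> nat \<Rightarrow> bool" where
  "counterexample C w \<longleftrightarrow> 0 < w \<and> opt C w < grd C w"

definition canonical :: "nat list \<Rightarrow> bool" where
  "canonical C \<longleftrightarrow> (\<nexists>w. counterexample C w)"

end

theory Submission
  imports Defs
begin

text \<open>Write a = c2 and b = c4. Adding a coin to a representation raises its size by one, so a
  system is canonical as soon as adding any single coin raises the greedy count by at most one.
  The greedy count of C is v div (2b - 1) plus the greedy count of the subsystem (1, a, 2a - 1,
  b, a + b - 1) at v mod (2b - 1), and on [0, 2b - 1) the latter is an explicit function of the
  greedy count of the canonical system (1, a, 2a - 1). A case analysis over residues then reduces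
  the one-coin condition for all six coins to the single inequality
  a - 1 \<le> grd (1, a, 2a - 1) (b - 1), which follows from grd C (l c3) \<le> l by writing
  l c3 = c5 + r with r < c3. The subsystem is noncanonical because 2b = b + b, while its greedy
  count at 2b is at least three.\<close>

lemma grd_0 [simp]: "grd C 0 = 0"
proof -
  have "grd_desc cs 0 = 0" for cs by (induction cs) auto
  then show ?thesis by (simp add: grd_def)
qed

lemma grd_snoc: "grd (C @ [c]) v = v div c + grd C (v mod c)"
  by (simp add: grd_def)

lemma system_coin_pos:
  assumes "is_system C" "i < length C"
  shows "0 < C ! i"
  using assms sorted_wrt_nth_less[of "(<)" C 0 i]
  by (cases "i = 0") (auto simp: is_system_def)

lemma finite_reps:
  assumes "is_system C"
  shows "finite (reps C v)"
proof -
  have "reps C v \<subseteq> {x. set x \<subseteq> {..v} \<and> length x = length C}"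
  proof (clarsimp simp: reps_def)
    fix x :: "nat list" and y assume "length x = length C" and "y \<in> set x"
    then obtain i where i: "i < length C" "x ! i = y" by (auto simp: in_set_conv_nth)
    have "y \<le> C ! i * x ! i" using system_coin_pos[OF assms i(1)] i(2) by simp
    also have "\<dots> \<le> (\<Sum>j<length C. C ! j * x ! j)"
      using i(1) by (intro member_le_sum) auto
    finally show "y \<le> (\<Sum>j<length C. C ! j * x ! j)" .
  qed
  then show ?thesis using finite_subset finite_lists_length_eq[of "{..v}"] by blast
qed

lemma reps_nonempty:
  assumes "is_system C"
  shows "reps C v \<noteq> {}"
proof -
  define x where "x = v # replicate (length C - 1) 0"
  have "(\<Sum>j<length C. C ! j * x ! j) = (\<Sum>j<length C. if j = 0 then v else 0)"
    using assms by (intro sum.cong) (auto simp: x_def is_system_def nth_Cons')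
  also have "\<dots> = v" using assms by (simp add: is_system_def)
  finally have "x \<in> reps C v" using assms by (simp add: reps_def x_def is_system_def)
  then show ?thesis by blast
qed

lemma opt_le_sum_list:
  assumes "is_system C" "x \<in> reps C v"
  shows "opt C v \<le> sum_list x"
  unfolding opt_def using finite_reps[OF assms(1)] assms(2) by simp

lemma opt_attained:
  assumes "is_system C"
  obtains x where "x \<in> reps C v" "opt C v = sum_list x"
proof -
  have "opt C v \<in> sum_list ` reps C v"
    unfolding opt_def using finite_reps[OF assms] reps_nonempty[OF assms] by (intro Min_in) auto
  then show ?thesis using that by blast
qed

lemma weighted_sum_remove_one:
  fixes x :: "nat list" and c :: "nat \<Rightarrow> nat"
  assumes "i < length x" "0 < x ! i"
  shows "(\<Sum>j<length x. c j * x ! j) = (\<Sum>j<length x. c j * x[i := x ! i - 1] ! j) + c i"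
proof -
  have "(\<Sum>j<length x. c j * x ! j) =
      (\<Sum>j<length x. c j * x[i := x ! i - 1] ! j + (if j = i then c i else 0))"
  proof (intro sum.cong refl)
    obtain n where "x ! i = Suc n" using assms(2) gr0_implies_Suc by blast
    then have "c i * x ! i = c i * (x ! i - 1) + c i" by simp
    then show "c j * x ! j = c j * x[i := x ! i - 1] ! j + (if j = i then c i else 0)" for j
      using assms(1) by (cases "j = i") auto
  qed
  then show ?thesis using assms(1) by (simp add: sum.distrib)
qed

lemma canonical_if_grd_add_coin_le:
  assumes sys: "is_system C"
    and step: "\<And>u i. i < length C \<Longrightarrow> grd C (u + C ! i) \<le> grd C u + 1"
  shows "canonical C"
proof -
  have grd_le: "grd C (\<Sum>j<length C. C ! j * x ! j) \<le> sum_list x"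
    if "length x = length C" for x
    using that
  proof (induction "sum_list x" arbitrary: x)
    case 0
    then have "\<forall>j<length C. x ! j = 0" by (simp add: sum_list_eq_0_iff)
    then show ?case by simp
  next
    case (Suc m)
    then obtain i where i: "i < length x" "0 < x ! i"
      by (metis gr0I in_set_conv_nth sum_list_eq_0_iff nat.simps(3))
    define x' where "x' = x[i := x ! i - 1]"
    have sum_x': "Suc (sum_list x') = sum_list x"
      using i elem_le_sum_list[OF i(1)] by (simp add: x'_def sum_list_update)
    have "(\<Sum>j<length C. C ! j * x ! j) = (\<Sum>j<length C. C ! j * x' ! j) + C ! i"
      using weighted_sum_remove_one[OF i] Suc.prems by (simp add: x'_def)
    then have "grd C (\<Sum>j<length C. C ! j * x ! j) \<le> grd C (\<Sum>j<length C. C ! j * x' ! j) + 1"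
      using step[of i] i Suc.prems by simp
    also have "\<dots> \<le> sum_list x' + 1"
      using Suc.hyps(1)[of x'] Suc.hyps(2) Suc.prems sum_x' by (simp add: x'_def)
    finally show ?case using sum_x' by simp
  qed
  show ?thesis unfolding canonical_def counterexample_def
  proof clarify
    fix w assume "opt C w < grd C w"
    moreover obtain x where "x \<in> reps C w" "opt C w = sum_list x"
      using opt_attained[OF sys] .
    ultimately show False using grd_le[of x] by (auto simp: reps_def)
  qed
qed

lemma grd_snoc_add_coin_le:
  assumes "0 < m" "c \<le> m"
    and no_wrap: "\<And>s. s + c < m \<Longrightarrow> grd C (s + c) \<le> grd C s + 1"
    and wrap: "\<And>s. s < m \<Longrightarrow> m \<le> s + c \<Longrightarrow> grd C (s + c - m) \<le> grd C s"
  shows "grd (C @ [m]) (u + c) \<le> grd (C @ [m]) u + 1"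
proof -
  define q s where "q = u div m" and "s = u mod m"
  have u: "u = q * m + s" "s < m" using assms(1) by (simp_all add: q_def s_def)
  have div_mod: "(k * m + r) div m = k" "(k * m + r) mod m = r" if "r < m" for k r
    using that by simp_all
  show ?thesis
  proof (cases "s + c < m")
    case True
    then have "(u + c) div m = q" "(u + c) mod m = s + c"
      using div_mod[of "s + c" q] by (simp_all add: u add.assoc)
    then show ?thesis using no_wrap[OF True] by (simp add: grd_snoc q_def s_def)
  next
    case False
    then have "u + c = Suc q * m + (s + c - m)" "s + c - m < m" using u assms(2) by auto
    then have "(u + c) div m = Suc q" "(u + c) mod m = s + c - m"
      using div_mod[of "s + c - m" "Suc q"] by simp_all
    then show ?thesis using wrap[OF u(2)] False by (simp add: grd_snoc q_def s_def)
  qed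
qed

lemma nat_ceiling_divide_bounds:
  fixes n d :: nat
  assumes "0 < d"
  shows "n \<le> nat \<lceil>real n / real d\<rceil> * d" and "nat \<lceil>real n / real d\<rceil> * d < n + d"
proof -
  have "real n \<le> of_int \<lceil>real n / real d\<rceil> * real d"
    using ceiling_divide_upper[of "real d" "real n"] assms by simp
  moreover have "(of_int \<lceil>real n / real d\<rceil> - 1) * real d < real n"
    using ceiling_divide_lower[of "real d" "real n"] assms by simp
  moreover have "0 \<le> \<lceil>real n / real d\<rceil>"
    using ceiling_mono[of 0 "real n / real d"] by simp
  ultimately have "real n \<le> real (nat \<lceil>real n / real d\<rceil> * d)"
    and "real (nat \<lceil>real n / real d\<rceil> * d) < real (n + d)"
    by (simp_all add: algebra_simps)
  then show "n \<le> nat \<lceil>real n / real d\<rceil> * d" and "nat \<lceil>real n / real d\<rceil> * d < n + d"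
    by linarith+
qed

definition grd3 :: "nat \<Rightarrow> nat \<Rightarrow> nat" where
  "grd3 a = grd [1, a, 2*a - 1]"

definition grd5 :: "nat \<Rightarrow> nat \<Rightarrow> nat \<Rightarrow> nat" where
  "grd5 a b = grd [1, a, 2*a - 1, b, a + b - 1]"

context
  fixes a :: nat
  assumes a2: "a \<ge> 2"
begin

lemma grd3_eq:
  assumes "r < 2*a - 1"
  shows "grd3 a (q * (2*a - 1) + r) = q + (if r < a then r else r - a + 1)"
proof -
  have "grd3 a t = t div (2*a - 1) + (t mod (2*a - 1)) div a + (t mod (2*a - 1)) mod a" for t
    by (simp add: grd3_def grd_def)
  moreover have "r div a = 1" "r mod a = r - a" if "a \<le> r"
    using that assms by (simp_all add: le_div_geq le_mod_geq)
  ultimately show ?thesis using assms by auto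
qed

lemma grd3_split:
  obtains q r where "t = q * (2*a - 1) + r" "r < 2*a - 1"
    "grd3 a t = q + (if r < a then r else r - a + 1)"
proof
  show "t = t div (2*a - 1) * (2*a - 1) + t mod (2*a - 1)" by (rule div_mult_mod_eq[symmetric])
  show "t mod (2*a - 1) < 2*a - 1" using a2 by simp
  then show "grd3 a t = t div (2*a - 1) + (if t mod (2*a - 1) < a then t mod (2*a - 1)
      else t mod (2*a - 1) - a + 1)"
    by (subst div_mult_mod_eq[symmetric, of t "2*a - 1"], rule grd3_eq)
qed

lemma grd3_small: "t < a \<Longrightarrow> grd3 a t = t"
  using grd3_eq[of t 0] by simp

lemma grd3_pos: "0 < t \<Longrightarrow> 0 < grd3 a t"
  by (rule grd3_split[of t]) auto

lemma grd3_add_2a1: "grd3 a (t + (2*a - 1)) = grd3 a t + 1"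
proof -
  obtain q r where t: "t = q * (2*a - 1) + r" "r < 2*a - 1"
    "grd3 a t = q + (if r < a then r else r - a + 1)"
    using grd3_split .
  have e: "t + (2*a - 1) = Suc q * (2*a - 1) + r" using t(1) by simp
  have "grd3 a (t + (2*a - 1)) = Suc q + (if r < a then r else r - a + 1)"
    unfolding e by (rule grd3_eq[OF t(2)])
  then show ?thesis using t(3) by simp
qed

lemma grd3_add_one: "grd3 a (t + 1) \<le> grd3 a t + 1"
proof -
  obtain q r where t: "t = q * (2*a - 1) + r" "r < 2*a - 1"
    "grd3 a t = q + (if r < a then r else r - a + 1)"
    using grd3_split .
  show ?thesis
  proof (cases "r + 1 < 2*a - 1")
    case True
    have e: "t + 1 = q * (2*a - 1) + (r + 1)" using t(1) by simp
    have "grd3 a (t + 1) = q + (if r + 1 < a then r + 1 else r + 1 - a + 1)"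
      unfolding e by (rule grd3_eq[OF True])
    then show ?thesis using t(3) by (simp split: if_split_asm)
  next
    case False
    then have e: "t + 1 = Suc q * (2*a - 1) + 0" using t(1,2) by simp
    have "grd3 a (t + 1) = Suc q"
      unfolding e using grd3_eq[of 0 "Suc q"] a2 by simp
    then show ?thesis using t(3) by simp
  qed
qed

lemma grd3_add_le: "grd3 a (t + k) \<le> grd3 a t + k"
proof (induction k)
  case (Suc k)
  then show ?case using grd3_add_one[of "t + k"] by simp
qed simp

lemma grd3_add_a: "grd3 a (t + a) \<le> grd3 a t + 1"
proof -
  obtain q r where t: "t = q * (2*a - 1) + r" "r < 2*a - 1"
    "grd3 a t = q + (if r < a then r else r - a + 1)"
    using grd3_split .
  show ?thesis
  proof (cases "r + a < 2*a - 1")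
    case True
    have e: "t + a = q * (2*a - 1) + (r + a)" using t(1) by simp
    have "grd3 a (t + a) = q + (if r + a < a then r + a else r + a - a + 1)"
      unfolding e by (rule grd3_eq[OF True])
    then show ?thesis using t(3) True by (simp split: if_split_asm)
  next
    case False
    then have e: "t + a = Suc q * (2*a - 1) + (r + 1 - a)" and small: "r + 1 - a < a"
      using t(1,2) by auto
    have "grd3 a (t + a) = Suc q + (r + 1 - a)"
      unfolding e using grd3_eq[of "r + 1 - a" "Suc q"] small a2 by simp
    then show ?thesis using t(3) False by (simp split: if_split_asm)
  qed
qed

lemma grd3_le_add_a_minus_1: "grd3 a t \<le> grd3 a (t + (a - 1))"
proof -
  have "t + (2*a - 1) = t + (a - 1) + a" using a2 by simp
  then have "grd3 a (t + (a - 1) + a) = grd3 a t + 1" using grd3_add_2a1[of t] by argo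
  then show ?thesis using grd3_add_a[of "t + (a - 1)"] by linarith
qed

text \<open>The suffixes 2a1 and ab1 in lemma names refer to the coins 2a - 1 and a + b - 1.\<close>

context
  fixes b :: nat
  assumes b3: "b \<ge> 3*a - 1"
begin

lemma is_system_coins: "is_system [1, a, 2*a - 1, b, a + b - 1, 2*b - 1]"
  using a2 b3 by (simp add: is_system_def) linarith

lemma grd5_eq_div_mod:
  "grd5 a b s = s div (a + b - 1) + s mod (a + b - 1) div b + grd3 a (s mod (a + b - 1) mod b)"
  by (simp add: grd5_def grd3_def grd_def)

lemma grd5_0: "grd5 a b 0 = 0"
  by (simp add: grd5_def)

lemma grd5_below_b: "s < b \<Longrightarrow> grd5 a b s = grd3 a s"
  using a2 b3 by (simp add: grd5_eq_div_mod)

lemma grd5_from_b: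
  assumes "b \<le> s" "s < a + b - 1"
  shows "grd5 a b s = 1 + (s - b)"
proof -
  have "s div b = 1" "s mod b = s - b" using assms a2 b3 by (simp_all add: le_div_geq le_mod_geq)
  moreover have "grd3 a (s - b) = s - b" using grd3_small assms by simp
  ultimately show ?thesis using assms by (simp add: grd5_eq_div_mod)
qed

lemma grd5_from_ab1:
  assumes "a + b - 1 \<le> s" "s < 2*b - 1"
  shows "grd5 a b s = 1 + grd3 a (s - (a + b - 1))"
proof -
  have "s div (a + b - 1) = 1" "s mod (a + b - 1) = s - (a + b - 1)"
    using assms a2 b3 by (simp_all add: le_div_geq le_mod_geq)
  moreover have "s - (a + b - 1) < b" using assms a2 by simp
  ultimately show ?thesis by (simp add: grd5_eq_div_mod)
qed

lemma counterexample_2b: "counterexample [1, a, 2*a - 1, b, a + b - 1] (2*b)"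
proof -
  have sys: "is_system [1, a, 2*a - 1, b, a + b - 1]"
    using is_system_coins by (simp add: is_system_def)
  have "[0, 0, 0, 2, 0] \<in> reps [1, a, 2*a - 1, b, a + b - 1] (2*b)"
    by (simp add: reps_def lessThan_Suc numeral_eq_Suc)
  then have opt: "opt [1, a, 2*a - 1, b, a + b - 1] (2*b) \<le> 2"
    using opt_le_sum_list[OF sys] by fastforce
  have "2*b div (a + b - 1) = 1" "2*b mod (a + b - 1) = b - a + 1" "b - a + 1 < b"
    using a2 b3 by (simp_all add: le_div_geq le_mod_geq)
  then have grd: "grd [1, a, 2*a - 1, b, a + b - 1] (2*b) = 1 + grd3 a (b - a + 1)"
    using grd5_eq_div_mod[of "2*b"] by (simp add: grd5_def)
  have "b - a + 1 = (b + 2 - 3*a) + (2*a - 1)" using a2 b3 by arith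
  then have "grd3 a (b - a + 1) = grd3 a (b + 2 - 3*a) + 1"
    using grd3_add_2a1[of "b + 2 - 3*a"] by argo
  moreover have "0 < grd3 a (b + 2 - 3*a)" using grd3_pos b3 by simp
  ultimately show ?thesis using opt grd a2 b3 by (simp add: counterexample_def)
qed

lemma grd3_b_minus_1_ge:
  assumes lower: "a + b - 1 \<le> l * (2*a - 1)"
    and upper: "l * (2*a - 1) < a + b - 1 + (2*a - 1)"
    and grd_le: "grd5 a b (l * (2*a - 1)) \<le> l"
  shows "a - 1 \<le> grd3 a (b - 1)"
proof -
  define r where "r = l * (2*a - 1) - (a + b - 1)"
  have r: "r < 2*a - 1" "l * (2*a - 1) = a + b - 1 + r"
    using lower upper by (simp_all add: r_def)
  have "grd5 a b (l * (2*a - 1)) = 1 + (if r < a then r else r - a + 1)"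
    using grd5_from_ab1 grd3_eq[OF r(1), of 0] r a2 b3 by simp
  then have l_ge: "1 + (if r < a then r else r - a + 1) \<le> l" using grd_le by simp
  show ?thesis
  proof (cases "r < a")
    case True
    have "l \<ge> 1" using l_ge by simp
    then have "(l - 1) * (2*a - 1) + (2*a - 1) = l * (2*a - 1)"
      by (metis add.commute le_add_diff_inverse mult_Suc plus_1_eq_Suc)
    then have e: "b - 1 = (l - 1) * (2*a - 1) + (a - 1 - r)"
      using r True a2 by linarith
    have "grd3 a (b - 1) = (l - 1) + (if a - 1 - r < a then a - 1 - r else a - 1 - r - a + 1)"
      unfolding e by (rule grd3_eq) (use a2 in arith)
    then show ?thesis using l_ge True by simp
  next
    case False
    have "l \<ge> 2" using l_ge False by simp
    then have "(l - 2) * (2*a - 1) + 2 * (2*a - 1) = l * (2*a - 1)"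
      by (metis add_mult_distrib le_add_diff_inverse2)
    then have e: "b - 1 = (l - 2) * (2*a - 1) + (3*a - 2 - r)"
      using r False a2 by linarith
    have "grd3 a (b - 1) =
        (l - 2) + (if 3*a - 2 - r < a then 3*a - 2 - r else 3*a - 2 - r - a + 1)"
      unfolding e by (rule grd3_eq) (use False r(1) in arith)
    moreover have "\<not> 3*a - 2 - r < a" using r(1) by arith
    ultimately show ?thesis using l_ge False r(1) by simp
  qed
qed

context
  assumes key: "a - 1 \<le> grd3 a (b - 1)"
begin

lemma grd3_b_minus_a_add_ge:
  assumes "t \<le> a - 1"
  shows "t \<le> grd3 a (b - a + t)"
proof -
  have "b - 1 = (b - a + t) + (a - 1 - t)" using assms a2 b3 by simp
  then have "grd3 a (b - 1) \<le> grd3 a (b - a + t) + (a - 1 - t)"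
    using grd3_add_le[of "b - a + t" "a - 1 - t"] by simp
  then show ?thesis using key assms by linarith
qed

lemma grd5_add_one:
  assumes "s + 1 < 2*b - 1"
  shows "grd5 a b (s + 1) \<le> grd5 a b s + 1"
proof -
  consider "s + 1 < b" | "s + 1 = b" | "b \<le> s" "s + 1 < a + b - 1" | "s + 1 = a + b - 1"
    | "a + b - 1 \<le> s"
    by linarith
  then show ?thesis
  proof cases
    case 1
    then show ?thesis using grd5_below_b[of s] grd5_below_b[of "s + 1"] grd3_add_one[of s] by simp
  next
    case 2
    then show ?thesis using grd5_from_b[of "s + 1"] a2 by simp
  next
    case 3
    then show ?thesis using grd5_from_b[of "s + 1"] grd5_from_b[of s] by simp
  next
    case 4
    then have "grd5 a b (s + 1) = 1" using grd5_from_ab1[of "s + 1"] grd3_small[of 0] a2 b3 by simp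
    then show ?thesis by simp
  next
    case 5
    then have "s + 1 - (a + b - 1) = (s - (a + b - 1)) + 1" by arith
    then show ?thesis
      using grd5_from_ab1[of "s + 1"] grd5_from_ab1[of s] 5 assms grd3_add_one[of "s - (a + b - 1)"]
      by simp
  qed
qed

lemma grd5_add_a:
  assumes "s + a < 2*b - 1"
  shows "grd5 a b (s + a) \<le> grd5 a b s + 1"
proof -
  consider "s + a < b" | "s < b" "b \<le> s + a" "s + a < a + b - 1" | "s < b" "a + b - 1 \<le> s + a"
    | "b \<le> s" "s < a + b - 1" | "a + b - 1 \<le> s"
    by linarith
  then show ?thesis
  proof cases
    case 1
    then show ?thesis using grd5_below_b[of s] grd5_below_b[of "s + a"] grd3_add_a[of s] by simp
  next
    case 2
    then have "s = b - a + (s + a - b)" using a2 b3 by arith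
    then have "s + a - b \<le> grd3 a s" using grd3_b_minus_a_add_ge[of "s + a - b"] 2 by simp
    then show ?thesis using grd5_from_b[of "s + a"] grd5_below_b[of s] 2 by simp
  next
    case 3
    then have "s + a = a + b - 1" using a2 by arith
    then have "grd5 a b (s + a) = 1" using grd5_from_ab1[of "s + a"] grd3_small[of 0] a2 b3 by simp
    then show ?thesis by simp
  next
    case 4
    then have "s + a - (a + b - 1) = s - b + 1" by arith
    moreover have "grd3 a (s - b + 1) = s - b + 1" using grd3_small 4 by simp
    ultimately show ?thesis using grd5_from_ab1[of "s + a"] grd5_from_b[of s] 4 assms by simp
  next
    case 5
    then have "s + a - (a + b - 1) = (s - (a + b - 1)) + a" by arith
    then show ?thesis
      using grd5_from_ab1[of "s + a"] grd5_from_ab1[of s] 5 assms grd3_add_a[of "s - (a + b - 1)"]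
      by simp
  qed
qed

lemma grd5_add_2a1:
  assumes "s + (2*a - 1) < 2*b - 1"
  shows "grd5 a b (s + (2*a - 1)) \<le> grd5 a b s + 1"
proof -
  consider "s + (2*a - 1) < b" | "s < b" "b \<le> s + (2*a - 1)" "s + (2*a - 1) < a + b - 1"
    | "s < b" "a + b - 1 \<le> s + (2*a - 1)" | "b \<le> s" "s < a + b - 1" | "a + b - 1 \<le> s"
    by linarith
  then show ?thesis
  proof cases
    case 1
    then show ?thesis
      using grd5_below_b[of s] grd5_below_b[of "s + (2*a - 1)"] grd3_add_2a1[of s] by simp
  next
    case 2
    define t where "t = s + (2*a - 1) - b"
    have t: "t + 1 \<le> a - 1" "s + a = b - a + (t + 1)" using 2 a2 unfolding t_def by arith+
    have "t + 1 \<le> grd3 a (s + a)" using grd3_b_minus_a_add_ge[OF t(1)] t(2) by simp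
    then have "t \<le> grd3 a s" using grd3_add_a[of s] by simp
    then show ?thesis
      using grd5_from_b[of "s + (2*a - 1)"] grd5_below_b[of s] 2 by (simp add: t_def)
  next
    case 3
    define t where "t = s - (b - a)"
    have t: "t \<le> a - 1" "s = b - a + t" "s + (2*a - 1) - (a + b - 1) = t"
      using 3 a2 b3 unfolding t_def by arith+
    have "grd3 a t = t" using grd3_small t a2 by simp
    then show ?thesis
      using grd5_from_ab1[of "s + (2*a - 1)"] grd5_below_b[of s] 3 assms t
        grd3_b_minus_a_add_ge[OF t(1)]
      by simp
  next
    case 4
    define t where "t = s - b"
    have t: "t < a - 1" "s + (2*a - 1) - (a + b - 1) = t + a" using 4 a2 unfolding t_def by arith+
    have "a + b - 1 \<le> s + (2*a - 1)" using 4 a2 by arith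
    then have "grd5 a b (s + (2*a - 1)) = 1 + grd3 a (t + a)" using grd5_from_ab1 assms t by simp
    moreover have "grd5 a b s = 1 + t" using grd5_from_b[of s] 4 by (simp add: t_def)
    moreover have "grd3 a t = t" using grd3_small t a2 by simp
    ultimately show ?thesis using grd3_add_a[of t] by simp
  next
    case 5
    then have e: "s + (2*a - 1) - (a + b - 1) = (s - (a + b - 1)) + (2*a - 1)" by arith
    have "a + b - 1 \<le> s + (2*a - 1)" using 5 by arith
    then have "grd5 a b (s + (2*a - 1)) = 1 + grd3 a (s + (2*a - 1) - (a + b - 1))"
      using grd5_from_ab1 assms by blast
    also have "\<dots> = 1 + (grd3 a (s - (a + b - 1)) + 1)" unfolding e grd3_add_2a1 ..
    finally show ?thesis using grd5_from_ab1[of s] 5 assms by simp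
  qed
qed

lemma grd5_add_b:
  assumes "s + b < 2*b - 1"
  shows "grd5 a b (s + b) \<le> grd5 a b s + 1"
proof (cases "s + b < a + b - 1")
  case True
  then have "grd3 a s = s" using grd3_small by simp
  then show ?thesis using grd5_from_b[of "s + b"] grd5_below_b[of s] True assms by simp
next
  case False
  define t where "t = s - (a - 1)"
  have t: "s = t + (a - 1)" "s + b - (a + b - 1) = t" using False a2 unfolding t_def by arith+
  have "grd5 a b (s + b) = 1 + grd3 a t" using grd5_from_ab1[of "s + b"] False assms t by simp
  moreover have "grd5 a b s = grd3 a (t + (a - 1))" using grd5_below_b[of s] assms t by simp
  ultimately show ?thesis using grd3_le_add_a_minus_1[of t] by simp
qed

lemma grd5_add_ab1:
  assumes "s + (a + b - 1) < 2*b - 1"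
  shows "grd5 a b (s + (a + b - 1)) \<le> grd5 a b s + 1"
  using grd5_from_ab1[of "s + (a + b - 1)"] grd5_below_b[of s] assms by simp

lemma grd5_wrap_one:
  assumes "s < 2*b - 1" "2*b - 1 \<le> s + 1"
  shows "grd5 a b (s + 1 - (2*b - 1)) \<le> grd5 a b s"
proof -
  have "s + 1 - (2*b - 1) = 0" using assms by simp
  then show ?thesis using grd5_0 by simp
qed

lemma grd5_wrap_a:
  assumes "s < 2*b - 1" "2*b - 1 \<le> s + a"
  shows "grd5 a b (s + a - (2*b - 1)) \<le> grd5 a b s"
proof -
  define t where "t = s + a - (2*b - 1)"
  have t: "t \<le> a - 1" "a + b - 1 \<le> s" "s - (a + b - 1) + a = b - a + t"
    using assms a2 b3 unfolding t_def by arith+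
  have "grd5 a b t = t" using grd5_below_b[of t] grd3_small[of t] t a2 b3 by simp
  then show ?thesis
    using grd5_from_ab1[of s] assms t grd3_b_minus_a_add_ge[OF t(1)]
      grd3_add_a[of "s - (a + b - 1)"]
    by (simp add: t_def)
qed

lemma grd5_wrap_2a1:
  assumes "s < 2*b - 1" "2*b - 1 \<le> s + (2*a - 1)"
  shows "grd5 a b (s + (2*a - 1) - (2*b - 1)) \<le> grd5 a b s"
proof -
  define t where "t = s + (2*a - 1) - (2*b - 1)"
  have t: "t < 2*a - 1" "a + b - 1 \<le> s" "s - (a + b - 1) + (2*a - 1) = b - a + t"
    using assms a2 b3 unfolding t_def by arith+
  have "grd3 a t \<le> grd3 a (b - a + t)"
  proof (cases "t < a")
    case True
    then show ?thesis using grd3_small grd3_b_minus_a_add_ge[of t] by simp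
  next
    case False
    have "grd3 a t = t - a + 1" using grd3_eq[OF t(1), of 0] False by simp
    moreover have "t - a + 1 \<le> grd3 a (b - a + (t - a + 1))"
      using grd3_b_minus_a_add_ge[of "t - a + 1"] t False by simp
    moreover have eq: "(b - a + (t - a + 1)) + (a - 1) = b - a + t" using False a2 by arith
    moreover have "grd3 a (b - a + (t - a + 1)) \<le> grd3 a (b - a + t)"
      using grd3_le_add_a_minus_1[of "b - a + (t - a + 1)"] unfolding eq .
    ultimately show ?thesis by linarith
  qed
  moreover have "grd5 a b t = grd3 a t" using grd5_below_b[of t] t a2 b3 by simp
  moreover have "grd5 a b s = 1 + grd3 a (s - (a + b - 1))"
    using grd5_from_ab1[of s] assms t by simp
  moreover have "grd3 a (b - a + t) = grd3 a (s - (a + b - 1)) + 1"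
    using grd3_add_2a1[of "s - (a + b - 1)"] unfolding t(3) .
  ultimately show ?thesis unfolding t_def[symmetric] by linarith
qed

lemma grd5_wrap_b:
  assumes "s < 2*b - 1" "2*b - 1 \<le> s + b"
  shows "grd5 a b (s + b - (2*b - 1)) \<le> grd5 a b s"
proof -
  consider "s < b" | "b \<le> s" "s < a + b - 1" | "a + b - 1 \<le> s" by linarith
  then show ?thesis
  proof cases
    case 1
    then have "s + b - (2*b - 1) = 0" using assms by simp
    then show ?thesis using grd5_0 by simp
  next
    case 2
    define t where "t = s + b - (2*b - 1)"
    have t: "t = s - b + 1" "t < a" using 2 assms unfolding t_def by arith+
    have "grd5 a b t = t" using grd5_below_b[of t] grd3_small[of t] t a2 b3 by simp
    then show ?thesis using grd5_from_b[of s] 2 t by (simp add: t_def)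
  next
    case 3
    define t where "t = s + b - (2*b - 1)"
    have t: "t = s - (a + b - 1) + a" "t < b" using 3 assms a2 unfolding t_def by arith+
    have "grd5 a b t = grd3 a t" using grd5_below_b[of t] t by simp
    then show ?thesis
      using grd5_from_ab1[of s] 3 assms t grd3_add_a[of "s - (a + b - 1)"] by (simp add: t_def)
  qed
qed

lemma grd5_wrap_ab1:
  assumes "s < 2*b - 1" "2*b - 1 \<le> s + (a + b - 1)"
  shows "grd5 a b (s + (a + b - 1) - (2*b - 1)) \<le> grd5 a b s"
proof -
  define t where "t = s + (a + b - 1) - (2*b - 1)"
  have t0: "t = s - (b - a)" "b - a \<le> s" using assms a2 b3 unfolding t_def by arith+
  consider "s < b" | "b \<le> s" "s < a + b - 1" | "a + b - 1 \<le> s" "t < b"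
    | "a + b - 1 \<le> s" "b \<le> t"
    by linarith
  then have "grd5 a b t \<le> grd5 a b s"
  proof cases
    case 1
    have t: "t \<le> a - 1" "b - a + t = s" using 1 t0 by arith+
    have "grd5 a b t = t" using grd5_below_b[of t] grd3_small[of t] t a2 b3 by simp
    moreover have "grd5 a b s = grd3 a s" using grd5_below_b[of s] 1 by simp
    moreover have "t \<le> grd3 a s" using grd3_b_minus_a_add_ge[OF t(1)] unfolding t(2) .
    ultimately show ?thesis by linarith
  next
    case 2
    have t: "a \<le> t" "t < 2*a - 1" "t - a + 1 = 1 + (s - b)" "t < b" using 2 t0 a2 b3 by arith+
    have "grd5 a b t = grd3 a t" using grd5_below_b[of t] t by simp
    also have "\<dots> = t - a + 1" using grd3_eq[OF t(2), of 0] t by simp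
    finally show ?thesis using grd5_from_b[of s] 2 t by linarith
  next
    case 3
    have t: "t = s - (a + b - 1) + (2*a - 1)" using 3 t0 a2 by arith
    have "grd5 a b t = grd3 a t" using grd5_below_b[of t] 3 by simp
    moreover have "grd3 a t = grd3 a (s - (a + b - 1)) + 1" unfolding t by (rule grd3_add_2a1)
    moreover have "grd5 a b s = 1 + grd3 a (s - (a + b - 1))"
      using grd5_from_ab1[of s] 3 assms by simp
    ultimately show ?thesis by linarith
  next
    case 4
    have t: "t < a + b - 1" "t - b + 1 \<le> a - 1" "b - a + (t - b + 1) = s - (a + b - 1) + a"
      using 4 t0 assms a2 by arith+
    have "grd5 a b t = 1 + (t - b)" using grd5_from_b[of t] t 4 by simp
    moreover have "t - b + 1 \<le> grd3 a (s - (a + b - 1) + a)"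
      using grd3_b_minus_a_add_ge[OF t(2)] unfolding t(3) .
    moreover have "grd5 a b s = 1 + grd3 a (s - (a + b - 1))"
      using grd5_from_ab1[of s] 4 assms by simp
    moreover have "grd3 a (s - (a + b - 1) + a) \<le> grd3 a (s - (a + b - 1)) + 1"
      by (rule grd3_add_a)
    ultimately show ?thesis by linarith
  qed
  then show ?thesis unfolding t_def .
qed

lemma grd_coins_add_coin_le:
  assumes "c \<in> set [1, a, 2*a - 1, b, a + b - 1, 2*b - 1]"
  shows "grd [1, a, 2*a - 1, b, a + b - 1, 2*b - 1] (u + c)
    \<le> grd [1, a, 2*a - 1, b, a + b - 1, 2*b - 1] u + 1"
proof -
  have step: "grd [1, a, 2*a - 1, b, a + b - 1, 2*b - 1] (u + c)
      \<le> grd [1, a, 2*a - 1, b, a + b - 1, 2*b - 1] u + 1"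
    if "c \<le> 2*b - 1"
      and "\<And>s. s + c < 2*b - 1 \<Longrightarrow> grd5 a b (s + c) \<le> grd5 a b s + 1"
      and "\<And>s. s < 2*b - 1 \<Longrightarrow> 2*b - 1 \<le> s + c \<Longrightarrow>
        grd5 a b (s + c - (2*b - 1)) \<le> grd5 a b s"
    for c
    using grd_snoc_add_coin_le[of "2*b - 1" c "[1, a, 2*a - 1, b, a + b - 1]" u] that a2 b3
    by (simp add: grd5_def)
  from assms consider "c = 1" | "c = a" | "c = 2*a - 1" | "c = b" | "c = a + b - 1" | "c = 2*b - 1"
    by auto
  then show ?thesis
  proof cases
    case 1
    then show ?thesis using step[OF _ grd5_add_one grd5_wrap_one] a2 b3 by simp
  next
    case 2
    then show ?thesis using step[OF _ grd5_add_a grd5_wrap_a] a2 b3 by simp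
  next
    case 3
    then show ?thesis using step[OF _ grd5_add_2a1 grd5_wrap_2a1] a2 b3 by simp
  next
    case 4
    then show ?thesis using step[OF _ grd5_add_b grd5_wrap_b] a2 b3 by simp
  next
    case 5
    then show ?thesis using step[OF _ grd5_add_ab1 grd5_wrap_ab1] a2 b3 by simp
  next
    case 6
    then show ?thesis using step[of "2*b - 1"] by simp
  qed
qed

lemma canonical_coins: "canonical [1, a, 2*a - 1, b, a + b - 1, 2*b - 1]"
  using is_system_coins grd_coins_add_coin_le nth_mem
  by (intro canonical_if_grd_add_coin_le) blast+

end

end

end

theorem lemma12:
  fixes c2 c4 :: nat
  defines "C \<equiv> [1, c2, 2*c2 - 1, c4, c2 + c4 - 1, 2*c4 - 1]"
  defines "l \<equiv> nat \<lceil>real (c2 + c4 - 1) / real (2*c2 - 1)\<rceil>"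
  assumes sys: "is_system C"
    and c4: "c4 \<ge> 3*c2 - 1"
    and hgrd: "int (grd C (l * (2*c2 - 1))) =
       int (l * (2*c2 - 1)) - int (c2 + c4 - 1) + 1
       - \<lfloor>(real (l * (2*c2 - 1)) - real (c2 + c4 - 1)) / real c2\<rfloor> * (int c2 - 1)"
    and hle: "grd C (l * (2*c2 - 1)) \<le> l"
  shows "canonical C \<and> \<not> canonical (take 5 C)"
proof -
  have c2: "c2 \<ge> 2" using sys by (simp add: C_def is_system_def)
  have l_bounds: "c2 + c4 - 1 \<le> l * (2*c2 - 1)" "l * (2*c2 - 1) < c2 + c4 - 1 + (2*c2 - 1)"
    unfolding l_def using nat_ceiling_divide_bounds[of "2*c2 - 1" "c2 + c4 - 1"] c2 by auto
  then have "l * (2*c2 - 1) < 2*c4 - 1" using c4 by linarith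
  then have "grd C (l * (2*c2 - 1)) = grd5 c2 c4 (l * (2*c2 - 1))"
    using grd_snoc[of "[1, c2, 2*c2 - 1, c4, c2 + c4 - 1]" "2*c4 - 1"]
    by (simp add: C_def grd5_def)
  then have "c2 - 1 \<le> grd3 c2 (c4 - 1)"
    using grd3_b_minus_1_ge[OF c2 c4 l_bounds] hle by simp
  then show ?thesis
    using canonical_coins[OF c2 c4] counterexample_2b[OF c2 c4]
    by (simp add: C_def canonical_def) blast
qed

end
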